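(* Let $U=U_1\times\cdots\times U_m\subset\mathbb{R}^m_+$ be a convex set with each $U_i\subseteq\mathbb{R}$, let $C\subseteq\mathbb{R}^m$ be a set and $\overline{U}=U\cap C$. Let $c\in\mathbb{R}^{n_1}$, $d\in\mathbb{R}^{n_2}$, $a_i\in\mathbb{R}^{n_1}$, $g_i\in\mathbb{R}^{n_2}$ ($i\in[m]$). For a set $S\subseteq\mathbb{R}^m$ define the adaptive robust value $$z(S)=\inf_{x\in\mathbb{R}^{n_1},\ y:S\to\mathbb{R}^{n_2}}\Big\{c^Tx+\sup_{u\in S}d^Ty(u):\ a_i^Tx+g_i^Ty(u)\ge u_i\ \ \forall u\in S,\ \forall i\in[m]\Big\},$$ and let $z_{\rm aro}=z(U)$, $z_{\rm acp}=z(\overline{U})$. Let $\rho_{\rm aro}=\rho(U^\downarrow,\overline{U}^\downarrow)$ and $\gamma_{\rm aro}=\gamma(U^\downarrow,\overline{U}^\downarrow)$. If $0<z_{\rm acp}\le z_{\rm aro}<\infty$, then $$\rho_{\rm aro}\le\frac{z_{\rm acp}}{z_{\rm aro}}\le\gamma_{\rm aro}.$$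
   Context: $[m]=\{1,\dots,m\}$. For $S\subseteq\mathbb{R}^m_+$, $S^\downarrow=\{t\in\mathbb{R}^m_+:\exists s\in S,\ t\le s\text{ componentwise}\}$. For $r\ge0$, $rS=\{rx:x\in S\}$. For sets $S_1,S_2$: $\rho(S_1,S_2)=\max\{\rho\ge 0:\rho S_1\subseteq S_2\}$ and $\gamma(S_1,S_2)=\min\{\gamma\ge0: S_2\subseteq \gamma S_1\}$. The second-stage decision $y$ ranges over arbitrary functions of the uncertainty. *)

theory Defs
  imports "HOL-Analysis.Analysis"
begin

definition down_closure :: "(real^'m) set \<Rightarrow> (real^'m) set" where
  "down_closure S = {t. (\<forall>i. 0 \<le> t$i) \<and> (\<exists>s\<in>S. \<forall>i. t$i \<le> s$i)}"

definition rho_sets :: "(real^'m) set \<Rightarrow> (real^'m) set \<Rightarrow> ereal" where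
  "rho_sets S1 S2 = Sup (ereal ` {r. 0 \<le> r \<and> (\<lambda>x. r *\<^sub>R x) ` S1 \<subseteq> S2})"

definition gamma_sets :: "(real^'m) set \<Rightarrow> (real^'m) set \<Rightarrow> ereal" where
  "gamma_sets S1 S2 = Inf (ereal ` {g. 0 \<le> g \<and> S2 \<subseteq> (\<lambda>x. g *\<^sub>R x) ` S1})"

definition z_val :: "real^'n1 \<Rightarrow> real^'n2 \<Rightarrow> ('m \<Rightarrow> real^'n1) \<Rightarrow> ('m \<Rightarrow> real^'n2)
    \<Rightarrow> (real^'m) set \<Rightarrow> ereal" where
  "z_val c d a g S =
     (INF xy \<in> {(x, y). \<forall>u\<in>S. \<forall>i. a i \<bullet> x + g i \<bullet> y u \<ge> u$i}.
        ereal (c \<bullet> fst xy) + (SUP u\<in>S. ereal (d \<bullet> snd xy u)))"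

end

theory Submission imports Defs begin

(* Both bounds rest on two properties of the adaptive robust value z: it is monotone in the
   uncertainty set and positively homogeneous, z(r S) = r z(S) (scale the first-stage decision
   and the policy by r).  Moreover z does not change when a nonnegative set S is replaced by its
   downward closure, since a policy on S serves every point dominated by a point of S.  Hence
   r U\<down> \<subseteq> (U \<inter> C)\<down> gives r z(U) \<le> z(U \<inter> C), and (U \<inter> C)\<down> \<subseteq> r U\<down> gives
   z(U \<inter> C) \<le> r z(U); taking sup resp. inf over r yields the two bounds. *)

definition robust_feasible ::
    "('m \<Rightarrow> real^'n1) \<Rightarrow> ('m \<Rightarrow> real^'n2) \<Rightarrow> (real^'m) set
       \<Rightarrow> ((real^'n1) \<times> (real^'m \<Rightarrow> real^'n2)) set" where
  "robust_feasible a g S = {(x, y). \<forall>u\<in>S. \<forall>i. a i \<bullet> x + g i \<bullet> y u \<ge> u$i}"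

definition robust_cost ::
    "real^'n1 \<Rightarrow> real^'n2 \<Rightarrow> (real^'m) set \<Rightarrow> (real^'n1) \<times> (real^'m \<Rightarrow> real^'n2) \<Rightarrow> ereal" where
  "robust_cost c d S xy = ereal (c \<bullet> fst xy) + (SUP u\<in>S. ereal (d \<bullet> snd xy u))"

lemma z_val_eq_INF:
  "z_val c d a g S = (INF xy\<in>robust_feasible a g S. robust_cost c d S xy)"
  by (simp add: z_val_def robust_feasible_def robust_cost_def)

lemma INF_ereal_mult_left:
  assumes "0 < r"
  shows "ereal r * (INF x\<in>A. f x) = (INF x\<in>A. ereal r * f x)"
proof -
  have "(INF x\<in>A. ereal r * f x) = Inf {ereal r * v |v. v \<in> f ` A}"
    by (rule arg_cong[where f = Inf]) auto
  also have "\<dots> = ereal r * Inf {v. v \<in> f ` A}"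
    by (rule ereal_Inf_cmult[OF assms])
  finally show ?thesis by simp
qed

lemma subset_down_closure:
  assumes "\<forall>u\<in>S. \<forall>i. 0 \<le> u$i"
  shows "S \<subseteq> down_closure S"
  using assms unfolding down_closure_def by auto

lemma z_val_mono:
  assumes "S \<subseteq> T"
  shows "z_val c d a g S \<le> z_val c d a g T"
  unfolding z_val_eq_INF
proof (rule INF_mono)
  fix m assume "m \<in> robust_feasible a g T"
  with assms show "\<exists>n\<in>robust_feasible a g S. robust_cost c d S n \<le> robust_cost c d T m"
    by (intro bexI[of _ m])
       (auto simp: robust_feasible_def robust_cost_def intro!: add_left_mono SUP_subset_mono)
qed

lemma z_val_down_closure_le: "z_val c d a g (down_closure S) \<le> z_val c d a g S"
  unfolding z_val_eq_INF
proof (rule INF_mono)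
  fix m assume m: "m \<in> robust_feasible a g S"
  obtain x y where xy: "m = (x, y)" by force
  obtain dom where dom: "\<And>t. t \<in> down_closure S \<Longrightarrow> dom t \<in> S \<and> (\<forall>i. t$i \<le> dom t $ i)"
  proof -
    have "\<forall>t\<in>down_closure S. \<exists>s\<in>S. \<forall>i. t$i \<le> s$i"
      unfolding down_closure_def by blast
    then show ?thesis using that by (metis bchoice)
  qed
  let ?n = "(x, y \<circ> dom)"
  have "?n \<in> robust_feasible a g (down_closure S)"
  proof (clarsimp simp: robust_feasible_def)
    fix t i assume t: "t \<in> down_closure S"
    have "t$i \<le> dom t $ i" using dom[OF t] by blast
    also have "\<dots> \<le> a i \<bullet> x + g i \<bullet> y (dom t)"
      using m xy dom[OF t] by (auto simp: robust_feasible_def)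
    finally show "t$i \<le> a i \<bullet> x + g i \<bullet> y (dom t)" .
  qed
  moreover have "(SUP t\<in>down_closure S. ereal (d \<bullet> y (dom t))) \<le> (SUP u\<in>S. ereal (d \<bullet> y u))"
    using dom by (auto intro!: SUP_least SUP_upper)
  ultimately show "\<exists>n\<in>robust_feasible a g (down_closure S).
      robust_cost c d (down_closure S) n \<le> robust_cost c d S m"
    using xy by (intro bexI[of _ ?n]) (auto simp: robust_cost_def intro!: add_left_mono)
qed

lemma z_val_down_closure:
  assumes "\<forall>u\<in>S. \<forall>i. 0 \<le> u$i"
  shows "z_val c d a g (down_closure S) = z_val c d a g S"
  using z_val_down_closure_le z_val_mono[OF subset_down_closure[OF assms]] by (rule antisym)

lemma z_val_empty: "z_val c d a g {} = -\<infinity>"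
  unfolding z_val_def by (simp add: bot_ereal_def)

lemma z_val_scaleR_le:
  assumes r: "0 < r"
  shows "z_val c d a g ((\<lambda>u. r *\<^sub>R u) ` S) \<le> ereal r * z_val c d a g S"
proof (cases "S = {}")
  case True
  then show ?thesis by (simp add: z_val_empty)
next
  case False
  have "z_val c d a g ((\<lambda>u. r *\<^sub>R u) ` S)
      \<le> (INF m\<in>robust_feasible a g S. ereal r * robust_cost c d S m)"
    unfolding z_val_eq_INF
  proof (rule INF_mono)
    fix m assume m: "m \<in> robust_feasible a g S"
    obtain x y where xy: "m = (x, y)" by force
    let ?n = "(r *\<^sub>R x, \<lambda>u. r *\<^sub>R y ((1 / r) *\<^sub>R u))"
    have "?n \<in> robust_feasible a g ((\<lambda>u. r *\<^sub>R u) ` S)"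
      using m xy r by (auto simp: robust_feasible_def distrib_left[symmetric])
    moreover have "robust_cost c d ((\<lambda>u. r *\<^sub>R u) ` S) ?n = ereal r * robust_cost c d S m"
      using r False xy
      by (simp add: robust_cost_def image_comp o_def Sup_ereal_mult_left' ereal_distrib_left)
    ultimately show "\<exists>n\<in>robust_feasible a g ((\<lambda>u. r *\<^sub>R u) ` S).
        robust_cost c d ((\<lambda>u. r *\<^sub>R u) ` S) n \<le> ereal r * robust_cost c d S m"
      by force
  qed
  also have "\<dots> = ereal r * z_val c d a g S"
    unfolding z_val_eq_INF by (rule INF_ereal_mult_left[OF r, symmetric])
  finally show ?thesis .
qed

lemma z_val_scaleR:
  assumes r: "0 < r"
  shows "z_val c d a g ((\<lambda>u. r *\<^sub>R u) ` S) = ereal r * z_val c d a g S"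
proof (rule antisym)
  show "z_val c d a g ((\<lambda>u. r *\<^sub>R u) ` S) \<le> ereal r * z_val c d a g S"
    by (rule z_val_scaleR_le[OF r])
next
  have unscale: "(\<lambda>u. (1 / r) *\<^sub>R u) ` (\<lambda>u. r *\<^sub>R u) ` S = S"
    using r by (force simp: image_comp o_def)
  have "ereal r * z_val c d a g S
      \<le> ereal r * (ereal (1 / r) * z_val c d a g ((\<lambda>u. r *\<^sub>R u) ` S))"
    using z_val_scaleR_le[of "1 / r" c d a g "(\<lambda>u. r *\<^sub>R u) ` S"] r unscale
    by (intro ereal_mult_left_mono) auto
  also have "\<dots> = z_val c d a g ((\<lambda>u. r *\<^sub>R u) ` S)"
    using r by (simp add: mult.assoc[symmetric])
  finally show "ereal r * z_val c d a g S \<le> z_val c d a g ((\<lambda>u. r *\<^sub>R u) ` S)" .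
qed

lemma z_val_le_zero:
  fixes T :: "(real^'m) set"
  assumes "T \<subseteq> {0}"
  shows "z_val c d a g T \<le> 0"
proof -
  have "z_val c d a g T \<le> z_val c d a g {0}" by (rule z_val_mono[OF assms])
  also have "\<dots> \<le> robust_cost c d {0::real^'m} (0, \<lambda>_. 0)"
    unfolding z_val_eq_INF by (rule INF_lower) (simp add: robust_feasible_def)
  finally show ?thesis by (simp add: robust_cost_def zero_ereal_def)
qed

lemma scaled_le_z_val_of_down_closure_subset:
  assumes S: "\<forall>u\<in>S. \<forall>i. 0 \<le> u$i" and r: "0 < r"
    and sub: "(\<lambda>u. r *\<^sub>R u) ` down_closure S \<subseteq> down_closure T"
  shows "ereal r * z_val c d a g S \<le> z_val c d a g T"
proof -
  have "ereal r * z_val c d a g S = z_val c d a g ((\<lambda>u. r *\<^sub>R u) ` down_closure S)"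
    by (simp add: z_val_scaleR[OF r] z_val_down_closure[OF S])
  also have "\<dots> \<le> z_val c d a g (down_closure T)" by (rule z_val_mono[OF sub])
  also have "\<dots> \<le> z_val c d a g T" by (rule z_val_down_closure_le)
  finally show ?thesis .
qed

lemma z_val_le_scaled_of_down_closure_subset:
  assumes T: "\<forall>u\<in>T. \<forall>i. 0 \<le> u$i" and r: "0 \<le> r"
    and sub: "down_closure T \<subseteq> (\<lambda>u. r *\<^sub>R u) ` down_closure S"
  shows "z_val c d a g T \<le> ereal r * z_val c d a g S"
proof -
  have "z_val c d a g T \<le> z_val c d a g ((\<lambda>u. r *\<^sub>R u) ` down_closure S)"
    using z_val_mono[OF subset_down_closure[OF T]] z_val_mono[OF sub] by (rule order_trans)
  also have "\<dots> \<le> ereal r * z_val c d a g S"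
  proof (cases "r = 0")
    case True
    then have "z_val c d a g ((\<lambda>u. r *\<^sub>R u) ` down_closure S) \<le> 0"
      by (intro z_val_le_zero) auto
    with True show ?thesis by (simp add: zero_ereal_def[symmetric])
  next
    case False
    with r have "0 < r" by simp
    then have "z_val c d a g ((\<lambda>u. r *\<^sub>R u) ` down_closure S)
        \<le> ereal r * z_val c d a g (down_closure S)"
      by (rule z_val_scaleR_le)
    also have "\<dots> \<le> ereal r * z_val c d a g S"
      using r by (intro ereal_mult_left_mono z_val_down_closure_le) simp
    finally show ?thesis .
  qed
  finally show ?thesis .
qed

lemma rho_sets_down_closure_le_z_val_ratio:
  assumes S: "\<forall>u\<in>S. \<forall>i. 0 \<le> u$i"
    and pos: "0 < z_val c d a g T" and le: "z_val c d a g T \<le> z_val c d a g S"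
    and fin: "z_val c d a g S < \<infinity>"
  shows "rho_sets (down_closure S) (down_closure T) \<le> z_val c d a g T / z_val c d a g S"
  unfolding rho_sets_def
proof (rule Sup_least, clarify)
  fix r :: real
  assume r: "0 \<le> r" and sub: "(\<lambda>u. r *\<^sub>R u) ` down_closure S \<subseteq> down_closure T"
  have "z_val c d a g S * ereal r \<le> z_val c d a g T"
  proof (cases "r = 0")
    case True
    with pos show ?thesis by (simp add: zero_ereal_def[symmetric])
  next
    case False
    with r show ?thesis
      using scaled_le_z_val_of_down_closure_subset[OF S _ sub] by (simp add: mult.commute)
  qed
  with pos le fin show "ereal r \<le> z_val c d a g T / z_val c d a g S"
    by (subst ereal_le_divide_pos) auto
qed

lemma z_val_ratio_le_gamma_sets_down_closure:
  assumes T: "\<forall>u\<in>T. \<forall>i. 0 \<le> u$i"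
    and pos: "0 < z_val c d a g T" and le: "z_val c d a g T \<le> z_val c d a g S"
    and fin: "z_val c d a g S < \<infinity>"
  shows "z_val c d a g T / z_val c d a g S \<le> gamma_sets (down_closure S) (down_closure T)"
  unfolding gamma_sets_def
proof (rule Inf_greatest, clarify)
  fix r :: real
  assume r: "0 \<le> r" and sub: "down_closure T \<subseteq> (\<lambda>u. r *\<^sub>R u) ` down_closure S"
  have "z_val c d a g T \<le> z_val c d a g S * ereal r"
    using z_val_le_scaled_of_down_closure_subset[OF T r sub] by (simp add: mult.commute)
  with pos le fin show "z_val c d a g T / z_val c d a g S \<le> ereal r"
    by (subst ereal_divide_le_pos) auto
qed

theorem theorem2:
  fixes Ui :: "'m::finite \<Rightarrow> real set"
    and U C :: "(real^'m) set"
    and c :: "real^'n1::finite" and d :: "real^'n2::finite"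
    and a :: "'m \<Rightarrow> real^'n1" and g :: "'m \<Rightarrow> real^'n2"
  assumes U_prod: "U = {u. \<forall>i. u$i \<in> Ui i}"
    and U_conv: "convex U"
    and U_nonneg: "\<forall>u\<in>U. \<forall>i. 0 \<le> u$i"
    and pos: "0 < z_val c d a g (U \<inter> C)"
    and le: "z_val c d a g (U \<inter> C) \<le> z_val c d a g U"
    and fin: "z_val c d a g U < \<infinity>"
  shows "rho_sets (down_closure U) (down_closure (U \<inter> C))
           \<le> z_val c d a g (U \<inter> C) / z_val c d a g U
       \<and> z_val c d a g (U \<inter> C) / z_val c d a g U
           \<le> gamma_sets (down_closure U) (down_closure (U \<inter> C))"
proof
  show "rho_sets (down_closure U) (down_closure (U \<inter> C))
      \<le> z_val c d a g (U \<inter> C) / z_val c d a g U"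
    using U_nonneg pos le fin by (rule rho_sets_down_closure_le_z_val_ratio)
  have "\<forall>u\<in>U \<inter> C. \<forall>i. 0 \<le> u$i" using U_nonneg by blast
  then show "z_val c d a g (U \<inter> C) / z_val c d a g U
      \<le> gamma_sets (down_closure U) (down_closure (U \<inter> C))"
    using pos le fin by (rule z_val_ratio_le_gamma_sets_down_closure)
qed

end
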